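(* Let $X=\prod_{i\in I}X_i$ be a topological product and suppose that a subspace $Y$ of $X$ fills all finite subproducts of $X$. If $Y$ is a $T_3$-space, then each factor $X_i$ is also a $T_3$-space.
   Context: For nonempty $J\subseteq I$, $\pi_J\colon X\to X_J=\prod_{i\in J}X_i$ is the projection. A set $Y\subseteq X$ fills finite subproducts of $X$ if $\pi_J(Y)=X_J$ for every finite nonempty $J\subseteq I$. A space is $T_3$ if every open neighborhood $U$ of a point $x$ contains an open neighborhood $V$ of $x$ with $\overline{V}\subseteq U$ (no $T_1$ assumed). *)

theory Defs
  imports "HOL-Analysis.Analysis"
begin

text \<open>T3 in the sense of the paper (no T1 assumed): every open neighbourhood U of a
point x contains an open neighbourhood V of x whose closure lies in U.\<close>
definition T3_space :: "'a topology \<Rightarrow> bool" where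
  "T3_space T \<longleftrightarrow>
     (\<forall>x U. openin T U \<and> x \<in> U \<longrightarrow>
        (\<exists>V. openin T V \<and> x \<in> V \<and> T closure_of V \<subseteq> U))"

text \<open>Y fills finite subproducts of the product over I: the projection onto every
finite nonempty subproduct J (realised as restriction to J) maps Y onto X_J.\<close>
definition fills_finite_subproducts :: "('i \<Rightarrow> 'a topology) \<Rightarrow> 'i set \<Rightarrow> ('i \<Rightarrow> 'a) set \<Rightarrow> bool" where
  "fills_finite_subproducts X I Y \<longleftrightarrow>
     (\<forall>J. finite J \<and> J \<noteq> {} \<and> J \<subseteq> I \<longrightarrow>
        (\<lambda>y. restrict y J) ` Y = topspace (product_topology X J))"

end

theory Submission
  imports Defs
begin

text \<open>Filling finite subproducts makes Y dense in the product, so closures in Y of traces of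
open sets are traces of closures in the product.  Given x in an open set U of X i, pick y in Y
with y i = x; regularity of Y yields a basic box (the product of sets B k) around y whose closure
meets Y only in points with i-th coordinate in U.  Then B i is the required neighbourhood of x:
for p in the closure of B i, filling the finite support of B gives a point z of Y with z i = p
that still lies in the closure of the box, as that closure is the product of the closures of
the B k.\<close>

lemma PiE_memI_off_topspace:
  assumes "y \<in> topspace (product_topology X I)"
    and "\<And>k. k \<in> I \<Longrightarrow> S k \<noteq> topspace (X k) \<Longrightarrow> y k \<in> S k"
  shows "y \<in> Pi\<^sub>E I S"
  using assms by (metis PiE_iff topspace_product_topology)

lemma fills_finite_subproducts_agree:
  assumes "fills_finite_subproducts X I Y" "finite J" "J \<noteq> {}" "J \<subseteq> I"
    and "\<And>k. k \<in> J \<Longrightarrow> f k \<in> topspace (X k)"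
  obtains y where "y \<in> Y" "\<And>k. k \<in> J \<Longrightarrow> y k = f k"
proof -
  have "restrict f J \<in> topspace (product_topology X J)"
    using assms(5) by simp
  then obtain y where "y \<in> Y" "restrict y J = restrict f J"
    using assms(1-4) unfolding fills_finite_subproducts_def by (metis imageE)
  then show thesis
    using that by (metis restrict_apply')
qed

lemma fills_finite_subproducts_dense:
  assumes "fills_finite_subproducts X I Y" "Y \<subseteq> topspace (product_topology X I)" "I \<noteq> {}"
  shows "product_topology X I closure_of Y = topspace (product_topology X I)"
proof
  show "product_topology X I closure_of Y \<subseteq> topspace (product_topology X I)"
    by (rule closure_of_subset_topspace)
next
  show "topspace (product_topology X I) \<subseteq> product_topology X I closure_of Y"
  proof
    fix f assume f: "f \<in> topspace (product_topology X I)"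
    have "\<exists>y\<in>Y. y \<in> T" if T: "openin (product_topology X I) T" "f \<in> T" for T
    proof -
      obtain N where N_fin: "finite {k \<in> I. N k \<noteq> topspace (X k)}"
        and "f \<in> Pi\<^sub>E I N" and N_T: "Pi\<^sub>E I N \<subseteq> T"
        using T unfolding openin_product_topology_alt by blast
      obtain i where "i \<in> I" using \<open>I \<noteq> {}\<close> by blast
      let ?J = "insert i {k \<in> I. N k \<noteq> topspace (X k)}"
      have "f k \<in> topspace (X k)" if "k \<in> ?J" for k
        using f that \<open>i \<in> I\<close> by (auto simp: PiE_iff)
      then obtain y where "y \<in> Y" and y_f: "\<And>k. k \<in> ?J \<Longrightarrow> y k = f k"
        using fills_finite_subproducts_agree[OF assms(1), of ?J f] N_fin \<open>i \<in> I\<close> by blast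
      have "y \<in> Pi\<^sub>E I N"
      proof (rule PiE_memI_off_topspace)
        show "y \<in> topspace (product_topology X I)" using \<open>y \<in> Y\<close> assms(2) by blast
        show "y k \<in> N k" if "k \<in> I" "N k \<noteq> topspace (X k)" for k
          using that y_f \<open>f \<in> Pi\<^sub>E I N\<close> by auto
      qed
      then show ?thesis using \<open>y \<in> Y\<close> N_T by blast
    qed
    then show "f \<in> product_topology X I closure_of Y"
      using f by (auto simp: in_closure_of)
  qed
qed

lemma closure_of_dense_subtopology_Int_open:
  assumes "X closure_of Y = topspace X" "openin X Q"
  shows "subtopology X Y closure_of (Q \<inter> Y) = Y \<inter> X closure_of Q"
  using assms closure_of_openin_Int_superset[of X Q Y] closure_of_subtopology_open[of X Y "Q \<inter> Y"]
  by (simp add: openin_subset)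

lemma T3_dense_subspace_of_product_box:
  assumes "T3_space (subtopology (product_topology X I) Y)"
    and "product_topology X I closure_of Y = topspace (product_topology X I)"
    and "openin (subtopology (product_topology X I) Y) W" "y \<in> W"
  obtains B where "finite {k \<in> I. B k \<noteq> topspace (X k)}" "\<forall>k\<in>I. openin (X k) (B k)"
    "y \<in> Pi\<^sub>E I B" "Y \<inter> product_topology X I closure_of Pi\<^sub>E I B \<subseteq> W"
proof -
  let ?P = "product_topology X I"
  obtain V where "openin (subtopology ?P Y) V" "y \<in> V" and V_W: "subtopology ?P Y closure_of V \<subseteq> W"
    using assms(1,3,4) unfolding T3_space_def by blast
  then obtain Q where "openin ?P Q" and V_eq: "V = Q \<inter> Y"
    unfolding openin_subtopology by blast
  then obtain B where "finite {k \<in> I. B k \<noteq> topspace (X k)}" "\<forall>k\<in>I. openin (X k) (B k)"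
    "y \<in> Pi\<^sub>E I B" and "Pi\<^sub>E I B \<subseteq> Q"
    using \<open>y \<in> V\<close> unfolding openin_product_topology_alt by blast
  moreover have "Y \<inter> ?P closure_of Pi\<^sub>E I B \<subseteq> W"
  proof -
    have "Y \<inter> ?P closure_of Pi\<^sub>E I B \<subseteq> Y \<inter> ?P closure_of Q"
      using closure_of_mono[OF \<open>Pi\<^sub>E I B \<subseteq> Q\<close>] by blast
    also have "\<dots> = subtopology ?P Y closure_of V"
      unfolding V_eq closure_of_dense_subtopology_Int_open[OF assms(2) \<open>openin ?P Q\<close>] ..
    finally show ?thesis using V_W by blast
  qed
  ultimately show thesis using that by blast
qed

lemma fills_finite_subproducts_closure_of_box:
  assumes "fills_finite_subproducts X I Y" "Y \<subseteq> topspace (product_topology X I)"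
    and "finite {k \<in> I. B k \<noteq> topspace (X k)}" "\<forall>k\<in>I. B k \<subseteq> topspace (X k)" "y \<in> Pi\<^sub>E I B"
    and "i \<in> I" "p \<in> X i closure_of B i"
  obtains z where "z \<in> Y" "z i = p" "z \<in> product_topology X I closure_of Pi\<^sub>E I B"
proof -
  let ?F = "insert i {k \<in> I. B k \<noteq> topspace (X k)}"
  have "(y(i := p)) k \<in> topspace (X k)" if "k \<in> ?F" for k
  proof (cases "k = i")
    case True
    then show ?thesis using assms(7) closure_of_subset_topspace by (metis fun_upd_same subsetD)
  next
    case False
    then have "k \<in> I" using that by blast
    then show ?thesis using False assms(4,5) by (metis PiE_mem fun_upd_other subsetD)
  qed
  then obtain z where "z \<in> Y" and z_agree: "\<And>k. k \<in> ?F \<Longrightarrow> z k = (y(i := p)) k"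
    using fills_finite_subproducts_agree[OF assms(1), of ?F "y(i := p)"] assms(3,6) by blast
  have "z \<in> Pi\<^sub>E I (\<lambda>k. X k closure_of B k)"
  proof (rule PiE_memI_off_topspace)
    show "z \<in> topspace (product_topology X I)" using \<open>z \<in> Y\<close> assms(2) by blast
    show "z k \<in> X k closure_of B k" if "k \<in> I" "X k closure_of B k \<noteq> topspace (X k)" for k
    proof -
      have "k \<in> ?F"
        using that by (metis (mono_tags, lifting) closure_of_topspace insertCI mem_Collect_eq)
      then have z_k: "z k = (y(i := p)) k"
        by (rule z_agree)
      show ?thesis
      proof (cases "k = i")
        case True
        then show ?thesis using z_k assms(7) by (metis fun_upd_same)
      next
        case False
        have "y k \<in> B k" using assms(5) \<open>k \<in> I\<close> by blast
        then show ?thesis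
          using z_k False assms(4) \<open>k \<in> I\<close> by (metis closure_of_subset fun_upd_other subsetD)
      qed
    qed
  qed
  moreover have "z i = p"
    using z_agree[of i] by (metis fun_upd_same insertI1)
  ultimately show thesis
    using that \<open>z \<in> Y\<close> unfolding closure_of_product_topology by blast
qed

theorem proposition3p2:
  fixes X :: "'i \<Rightarrow> 'a topology" and I :: "'i set" and Y :: "('i \<Rightarrow> 'a) set"
  assumes "Y \<subseteq> topspace (product_topology X I)"
    and "fills_finite_subproducts X I Y"
    and "T3_space (subtopology (product_topology X I) Y)"
  shows "\<forall>i\<in>I. T3_space (X i)"
  unfolding T3_space_def
proof (intro ballI allI impI, elim conjE)
  fix i x U assume "i \<in> I" "openin (X i) U" "x \<in> U"
  let ?P = "product_topology X I"
  have dense: "?P closure_of Y = topspace ?P"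
    using fills_finite_subproducts_dense[OF assms(2,1)] \<open>i \<in> I\<close> by blast
  obtain y where "y \<in> Y" "y i = x"
    using fills_finite_subproducts_agree[OF assms(2), of "{i}" "\<lambda>_. x"] \<open>i \<in> I\<close>
      \<open>openin (X i) U\<close> \<open>x \<in> U\<close> openin_subset by blast
  define W where "W = {z \<in> topspace ?P. z i \<in> U} \<inter> Y"
  have "openin (subtopology ?P Y) W"
    unfolding W_def
    by (rule openin_subtopology_Int[OF openin_continuous_map_preimage[OF
          continuous_map_product_projection[OF \<open>i \<in> I\<close>, of X] \<open>openin (X i) U\<close>]])
  moreover have "y \<in> W"
    unfolding W_def using \<open>y \<in> Y\<close> \<open>y i = x\<close> \<open>x \<in> U\<close> assms(1) by blast
  ultimately obtain B where B_fin: "finite {k \<in> I. B k \<noteq> topspace (X k)}"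
    and B_open: "\<forall>k\<in>I. openin (X k) (B k)" and "y \<in> Pi\<^sub>E I B"
    and B_W: "Y \<inter> ?P closure_of Pi\<^sub>E I B \<subseteq> W"
    by (rule T3_dense_subspace_of_product_box[OF assms(3) dense])
  have "X i closure_of B i \<subseteq> U"
  proof
    fix p assume "p \<in> X i closure_of B i"
    then obtain z where "z \<in> Y" "z i = p" "z \<in> ?P closure_of Pi\<^sub>E I B"
      using fills_finite_subproducts_closure_of_box[OF assms(2,1) B_fin _ \<open>y \<in> Pi\<^sub>E I B\<close> \<open>i \<in> I\<close>]
        B_open openin_subset by blast
    then show "p \<in> U" using B_W unfolding W_def by blast
  qed
  then show "\<exists>V. openin (X i) V \<and> x \<in> V \<and> X i closure_of V \<subseteq> U"
    using B_open \<open>i \<in> I\<close> \<open>y \<in> Pi\<^sub>E I B\<close> \<open>y i = x\<close> by blast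
qed

end
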